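(* Let $n=p_1^{m_1}\cdots p_k^{m_k}$ with $m_i>1$ for at least one $i$. Then $\mathcal E_{\mathbb Z_n}\cong K_m\vee H$, where $K_m$ is the complete graph on $m=\prod_{i=1}^k m_i-1$ vertices (the essential nonzero proper ideals) and $H=\mathscr G\big[\mathcal E_{\mathbb Z_n}([I])\big]_{I\in V(\mathscr G)}$ is the $\mathscr G$-generalized join of the edgeless graphs $\mathcal E_{\mathbb Z_n}([I])\cong\overline K_{\prod_{i\notin\Xi_I}m_i}$, with $\mathscr G\cong\mathbb{AIG}(\mathbb Z_{p_1p_2\cdots p_k})$.
   Context: Primes $p_1<\dots<p_k$, positive integers $m_i$. Nonzero proper ideals of $\mathbb Z_n$ are uniquely $\langle p_1^{r_1}\cdots p_k^{r_k}\rangle$, $0\le r_i\le m_i$, $(r_i)\ne(0,\dots,0),(m_1,\dots,m_k)$; such an ideal is essential iff $r_j\ne m_j$ for all $j$. Essential ideal graph $\mathcal E_{\mathbb Z_n}$: vertices the nonzero proper ideals, distinct $I,K$ adjacent iff $I+K$ is essential. $\mathscr U$ = nonzero proper nonessential ideals; $\Xi_I=\{i:r_i=m_i\}$; $I\preccurlyeq J$ iff $\Xi_I=\Xi_J$, class $[I]$, and $\mathcal E_{\mathbb Z_n}([I])$ the induced subgraph on $[I]$. $\mathscr G$: vertex set the $2^k-2$ ideals $\langle\prod_{i\in S}p_i^{m_i}\rangle$, $S$ nonempty proper subset of $\{1,\dots,k\}$, adjacent iff index sets disjoint. The $\mathscr G$-generalized join $\mathscr G[\Gamma_v]_{v}$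 replaces each vertex $v$ of $\mathscr G$ by $\Gamma_v$ and joins all vertices of $\Gamma_u$ to all vertices of $\Gamma_v$ when $u\sim v$. $\Gamma_1\vee\Gamma_2$ is the join. $\mathbb{AIG}(R)$: vertices nonzero ideals annihilated by some nonzero ideal, $I\sim K$ iff $IK=0$. *)

theory Defs
  imports "HOL-Number_Theory.Residues" "HOL-Algebra.Ideal_Product"
    "HOL-Computational_Algebra.Primes"
begin

type_synonym 'a graph = "'a set \<times> ('a \<Rightarrow> 'a \<Rightarrow> bool)"

definition verts :: "'a graph \<Rightarrow> 'a set" where "verts G = fst G"
definition adj :: "'a graph \<Rightarrow> 'a \<Rightarrow> 'a \<Rightarrow> bool" where "adj G = snd G"

definition graph_iso :: "'a graph \<Rightarrow> 'b graph \<Rightarrow> bool" where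
  "graph_iso G H \<longleftrightarrow> (\<exists>f. bij_betw f (verts G) (verts H) \<and>
      (\<forall>u\<in>verts G. \<forall>v\<in>verts G. adj G u v \<longleftrightarrow> adj H (f u) (f v)))"

definition complete_graph :: "nat \<Rightarrow> nat graph" where
  "complete_graph m = ({0..<m}, \<lambda>x y. x \<noteq> y)"

definition edgeless_graph :: "nat \<Rightarrow> nat graph" where
  "edgeless_graph m = ({0..<m}, \<lambda>x y. False)"

definition induced_subgraph :: "'a graph \<Rightarrow> 'a set \<Rightarrow> 'a graph" where
  "induced_subgraph G S = (S \<inter> verts G, adj G)"

definition graph_join :: "'a graph \<Rightarrow> 'b graph \<Rightarrow> ('a + 'b) graph" where
  "graph_join G H = (verts G <+> verts H,
     \<lambda>x y. case (x, y) of
        (Inl a, Inl b) \<Rightarrow> adj G a b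
      | (Inr a, Inr b) \<Rightarrow> adj H a b
      | _ \<Rightarrow> True)"

definition gen_join :: "'v graph \<Rightarrow> ('v \<Rightarrow> 'a graph) \<Rightarrow> ('v \<times> 'a) graph" where
  "gen_join G \<Gamma> = ((SIGMA v:verts G. verts (\<Gamma> v)),
     \<lambda>(u, x) (v, y). (u = v \<and> adj (\<Gamma> u) x y) \<or> (u \<noteq> v \<and> adj G u v))"

abbreviation Zn :: "nat \<Rightarrow> int ring" where "Zn n \<equiv> residue_ring (int n)"

definition nzp_ideal :: "('a, 'b) ring_scheme \<Rightarrow> 'a set \<Rightarrow> bool" where
  "nzp_ideal R I \<longleftrightarrow> ideal I R \<and> I \<noteq> {\<zero>\<^bsub>R\<^esub>} \<and> I \<noteq> carrier R"

definition essential_ideal :: "('a, 'b) ring_scheme \<Rightarrow> 'a set \<Rightarrow> bool" where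
  "essential_ideal R I \<longleftrightarrow> ideal I R \<and>
     (\<forall>J. ideal J R \<and> J \<noteq> {\<zero>\<^bsub>R\<^esub>} \<longrightarrow> I \<inter> J \<noteq> {\<zero>\<^bsub>R\<^esub>})"

definition Egraph :: "nat \<Rightarrow> int set graph" where
  "Egraph n = ({I. nzp_ideal (Zn n) I},
     \<lambda>I K. I \<noteq> K \<and> essential_ideal (Zn n) (I <+>\<^bsub>Zn n\<^esub> K))"

definition gen_ideal :: "nat \<Rightarrow> nat \<Rightarrow> int set" where
  "gen_ideal n d = PIdl\<^bsub>Zn n\<^esub> (int d mod int n)"

definition ideal_div :: "nat \<Rightarrow> int set \<Rightarrow> nat" where
  "ideal_div n I = (THE d. d dvd n \<and> I = gen_ideal n d)"

definition Xi :: "nat \<Rightarrow> int set \<Rightarrow> nat set" where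
  "Xi n I = {p \<in> prime_factors n. multiplicity p (ideal_div n I) = multiplicity p n}"

definition ideal_class :: "nat \<Rightarrow> int set \<Rightarrow> int set set" where
  "ideal_class n I = {J. nzp_ideal (Zn n) J \<and> \<not> essential_ideal (Zn n) J \<and> Xi n J = Xi n I}"

definition full_power_ideal :: "nat \<Rightarrow> nat set \<Rightarrow> int set" where
  "full_power_ideal n S = gen_ideal n (\<Prod>p\<in>S. p ^ multiplicity p n)"

definition Ggraph :: "nat \<Rightarrow> int set graph" where
  "Ggraph n = ({full_power_ideal n S | S. S \<subseteq> prime_factors n \<and> S \<noteq> {} \<and> S \<noteq> prime_factors n},
     \<lambda>I K. \<exists>S T. S \<subseteq> prime_factors n \<and> S \<noteq> {} \<and> S \<noteq> prime_factors n \<and>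
                 T \<subseteq> prime_factors n \<and> T \<noteq> {} \<and> T \<noteq> prime_factors n \<and>
                 I = full_power_ideal n S \<and> K = full_power_ideal n T \<and> S \<inter> T = {})"

definition AIG :: "('a, 'b) ring_scheme \<Rightarrow> 'a set graph" where
  "AIG R = ({I. ideal I R \<and> I \<noteq> {\<zero>\<^bsub>R\<^esub>} \<and>
               (\<exists>K. ideal K R \<and> K \<noteq> {\<zero>\<^bsub>R\<^esub>} \<and> I \<cdot>\<^bsub>R\<^esub> K = {\<zero>\<^bsub>R\<^esub>})},
     \<lambda>I K. I \<noteq> K \<and> I \<cdot>\<^bsub>R\<^esub> K = {\<zero>\<^bsub>R\<^esub>})"

end

theory Submission
  imports Defs
begin

(* Every ideal of Z/n is <d> for a unique divisor d of n, and <d> is the set of residues divisible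
   by d; hence <d> \<inter> <e> = <lcm d e> and <d> + <e> = <gcd d e>.  Comparing p-adic multiplicities,
   <d> is essential iff no exponent of d is full, so <d> + <e> is essential iff at every prime at
   least one of d, e has a non-full exponent.  Consequently an essential ideal is adjacent to all
   other vertices, while two non-essential ideals I, K are adjacent iff \<Xi>_I \<inter> \<Xi>_K = {}: adjacency
   only depends on the classes, each class is an independent set, and the classes are indexed
   by the ideals <\<Prod>p\<in>S. p^m_p> forming \<G>.  Counting exponent vectors gives the sizes, and
   S \<mapsto> <\<Prod>p\<notin>S. p> identifies \<G> with the annihilating-ideal graph of Z/(p_1\<cdots>p_k), because
   <\<Prod>A><\<Prod>B> = 0 there iff A \<union> B contains every prime. *)

section \<open>Ideals of the residue ring\<close>

lemma residue_ring_simps: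
  "carrier (Zn n) = {0..int n - 1}" "x \<otimes>\<^bsub>Zn n\<^esub> y = (x * y) mod int n"
  "x \<oplus>\<^bsub>Zn n\<^esub> y = (x + y) mod int n" "\<zero>\<^bsub>Zn n\<^esub> = 0"
  by (simp_all add: residue_ring_def)

lemma cring_residue_ring: "n > 1 \<Longrightarrow> cring (Zn n)"
  by (rule residues.cring) (simp add: residues_def)

definition multiples :: "nat \<Rightarrow> nat \<Rightarrow> int set" where
  "multiples n d = {x. 0 \<le> x \<and> x < int n \<and> int d dvd x}"

lemma gen_ideal_eq_multiples:
  assumes "n > 1" "d dvd n"
  shows "gen_ideal n d = multiples n d"
proof -
  have d_pos: "d > 0" using assms by (auto intro: Nat.gr0I)
  have dd: "int d dvd int n" using assms(2) by simp
  show ?thesis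
  proof (intro subset_antisym subsetI)
    fix y assume "y \<in> gen_ideal n d"
    then obtain x where y: "y = (x * (int d mod int n)) mod int n"
      unfolding gen_ideal_def cgenideal_def residue_ring_simps by auto
    have "int d dvd x * (int d mod int n)"
      using dd by (simp add: dvd_mod_iff)
    hence "int d dvd y" using dd y by (simp add: dvd_mod_iff)
    moreover have "0 \<le> y" "y < int n" using y assms(1) by auto
    ultimately show "y \<in> multiples n d" by (simp add: multiples_def)
  next
    fix y assume "y \<in> multiples n d"
    hence y: "0 \<le> y" "y < int n" "int d dvd y" by (auto simp: multiples_def)
    define c where "c = y div int d"
    have yc: "y = c * int d" using y(3) by (simp add: c_def)
    have "0 \<le> c" using y(1) d_pos by (simp add: c_def pos_imp_zdiv_nonneg_iff)
    moreover have "c * 1 \<le> c * int d" using \<open>0 \<le> c\<close> d_pos by (intro mult_left_mono) auto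
    ultimately have c: "c \<in> {0..int n - 1}" using y(2) yc by auto
    have "(c * (int d mod int n)) mod int n = y"
      using yc y by (simp add: mod_mult_right_eq)
    thus "y \<in> gen_ideal n d"
      unfolding gen_ideal_def cgenideal_def residue_ring_simps using c by (auto intro!: exI[of _ c])
  qed
qed

lemma ideal_gen_ideal:
  assumes "n > 1" shows "ideal (gen_ideal n d) (Zn n)"
proof -
  interpret cring "Zn n" using cring_residue_ring[OF assms] .
  show ?thesis unfolding gen_ideal_def
    by (rule cgenideal_ideal) (use assms in \<open>auto simp: residue_ring_simps\<close>)
qed

lemma ideal_multiples: "n > 1 \<Longrightarrow> d dvd n \<Longrightarrow> ideal (multiples n d) (Zn n)"
  using ideal_gen_ideal gen_ideal_eq_multiples by metis

lemma Zn_ideal_closed: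
  assumes "n > 1" "ideal I (Zn n)"
  shows "\<And>c x. x \<in> I \<Longrightarrow> (c * x) mod int n \<in> I"
    and "\<And>x y. x \<in> I \<Longrightarrow> y \<in> I \<Longrightarrow> (x + y) mod int n \<in> I"
    and "0 \<in> I" and "I \<subseteq> {0..int n - 1}"
proof -
  interpret ideal I "Zn n" by fact
  show "I \<subseteq> {0..int n - 1}" using Icarr residue_ring_simps(1) by blast
  show "0 \<in> I" using additive_subgroup.zero_closed[OF is_additive_subgroup]
    by (simp add: residue_ring_simps)
  show "(c * x) mod int n \<in> I" if "x \<in> I" for c x
  proof -
    have "c mod int n \<in> carrier (Zn n)" using assms(1) by (simp add: residue_ring_simps)
    from I_l_closed[OF that this] show ?thesis by (simp add: residue_ring_simps mod_mult_left_eq)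
  qed
  show "(x + y) mod int n \<in> I" if "x \<in> I" "y \<in> I" for x y
    using additive_subgroup.a_closed[OF is_additive_subgroup that] by (simp add: residue_ring_simps)
qed

text \<open>As in \<open>\<int>\<close>, the least positive element \<open>g\<close> of the ideal (or \<open>n\<close> if there is none)
  divides every \<open>x\<close> with \<open>x mod n \<in> I\<close>, since \<open>x mod g\<close> is again such an element.\<close>
lemma Zn_ideal_eq_multiples_least:
  fixes g :: int
  assumes n: "n > 1" and I: "ideal I (Zn n)"
    and g: "0 < g" "g \<le> int n" "g \<noteq> int n \<Longrightarrow> g \<in> I"
    and least: "\<And>r. r \<in> I \<Longrightarrow> 0 < r \<Longrightarrow> g \<le> r"
  shows "nat g dvd n" "I = multiples n (nat g)"
proof -
  note cl = Zn_ideal_closed[OF n I]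
  have below_g: "r = 0" if "r \<in> I" "0 \<le> r" "r < g" for r
    using least[of r] that by force
  have g_dvd: "g dvd x" if x: "x mod int n \<in> I" for x
  proof (cases "g = int n")
    case True
    with below_g[OF x] n show ?thesis by (simp add: dvd_eq_mod_eq_0)
  next
    case False
    have "(x mod int n + ((- (x div g)) * g) mod int n) mod int n \<in> I"
      using cl(2)[OF x cl(1)[OF g(3)[OF False]]] .
    also have "(x mod int n + ((- (x div g)) * g) mod int n) mod int n = (x + (- (x div g)) * g) mod int n"
      by (simp add: mod_add_eq)
    also have "x + (- (x div g)) * g = x mod g"
      by (simp add: minus_div_mult_eq_mod [symmetric])
    also have "x mod g mod int n = x mod g"
      using g(1,2) by (intro mod_pos_pos_trivial) (auto intro: order.strict_trans2[OF pos_mod_bound])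
    finally have "x mod g = 0" using below_g g(1) by simp
    thus ?thesis by (simp add: dvd_eq_mod_eq_0)
  qed
  have g_nat: "g = int (nat g)" using g(1) by simp
  have "g dvd int n" using g_dvd[of "int n"] cl(3) by simp
  thus "nat g dvd n" using g_nat by (metis of_nat_dvd_iff)
  show "I = multiples n (nat g)"
  proof (intro subset_antisym subsetI)
    fix x assume x: "x \<in> I"
    hence "0 \<le> x" "x < int n" using cl(4) by auto
    with x g_dvd[of x] g_nat show "x \<in> multiples n (nat g)" by (simp add: multiples_def)
  next
    fix y assume "y \<in> multiples n (nat g)"
    hence y: "0 \<le> y" "y < int n" "g dvd y" using g_nat by (auto simp: multiples_def)
    show "y \<in> I"
    proof (cases "g = int n")
      case True thus ?thesis using y cl(3) by (metis zdvd_not_zless dvd_0_right order_le_less)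
    next
      case False
      obtain c where "y = g * c" using y(3) by auto
      hence "y = (c * g) mod int n" using y by (simp add: mult.commute)
      thus ?thesis using cl(1)[OF g(3)[OF False]] by simp
    qed
  qed
qed

lemma Zn_ideal_eq_multiples:
  assumes n: "n > 1" and I: "ideal I (Zn n)"
  obtains d where "d dvd n" "I = multiples n d"
proof -
  define A where "A = {x\<in>I. x > 0} \<union> {int n}"
  define g where "g = Min A"
  have fin: "finite A" using Zn_ideal_closed(4)[OF n I] unfolding A_def by (auto intro: finite_subset)
  have gA: "g \<in> A" using fin unfolding g_def A_def by (intro Min_in) auto
  have g_min: "g \<le> x" if "x \<in> A" for x using fin that unfolding g_def by auto
  have "0 < g" "g \<le> int n" "g \<noteq> int n \<Longrightarrow> g \<in> I" "\<And>r. r \<in> I \<Longrightarrow> 0 < r \<Longrightarrow> g \<le> r"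
    using gA g_min n unfolding A_def by auto
  from Zn_ideal_eq_multiples_least[OF n I this] show ?thesis using that by blast
qed

lemma ideal_Zn_iff: "n > 1 \<Longrightarrow> ideal I (Zn n) \<longleftrightarrow> (\<exists>d. d dvd n \<and> I = multiples n d)"
  using Zn_ideal_eq_multiples ideal_multiples by metis

lemma mod_in_multiples: "d dvd n \<Longrightarrow> n > 0 \<Longrightarrow> int d mod int n \<in> multiples n d"
  by (auto simp: multiples_def dvd_mod_iff)

lemma multiples_subset_iff:
  assumes "n > 0" "d dvd n" "e dvd n"
  shows "multiples n d \<subseteq> multiples n e \<longleftrightarrow> e dvd d"
proof
  assume "e dvd d" thus "multiples n d \<subseteq> multiples n e" by (auto simp: multiples_def intro: dvd_trans)
next
  assume "multiples n d \<subseteq> multiples n e"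
  hence "int e dvd int d mod int n" using mod_in_multiples[OF assms(2,1)] by (auto simp: multiples_def)
  hence "int e dvd int d" using assms(3) by (simp add: dvd_mod_iff)
  thus "e dvd d" by simp
qed

lemma multiples_inj:
  assumes "n > 0" "d dvd n" "e dvd n" "multiples n d = multiples n e" shows "d = e"
  using multiples_subset_iff[OF assms(1-3)] multiples_subset_iff[OF assms(1,3,2)] assms(4)
  by (simp add: dvd_antisym)

lemma multiples_self: "n > 0 \<Longrightarrow> multiples n n = {0}"
  unfolding multiples_def using zdvd_not_zless[of _ "int n"] by (auto simp: order_le_less)

lemma multiples_eq_zero_iff:
  assumes "n > 0" "d dvd n" shows "multiples n d = {0} \<longleftrightarrow> d = n"
  using multiples_inj[OF assms dvd_refl] multiples_self[OF assms(1)] by auto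

lemma multiples_one: "multiples n 1 = carrier (Zn n)"
  by (auto simp: multiples_def residue_ring_simps)

lemma multiples_Int: "multiples n d \<inter> multiples n e = multiples n (lcm d e)"
  by (auto simp: multiples_def lcm_least_iff simp flip: lcm_int_int_eq)

lemma multiples_set_add:
  assumes n: "n > 1" and d: "d dvd n" and e: "e dvd n"
  shows "multiples n d <+>\<^bsub>Zn n\<^esub> multiples n e = multiples n (gcd d e)"
proof (intro subset_antisym subsetI)
  fix z assume "z \<in> multiples n d <+>\<^bsub>Zn n\<^esub> multiples n e"
  then obtain x y where xy: "x \<in> multiples n d" "y \<in> multiples n e" "z = (x + y) mod int n"
    unfolding set_add_def' by (auto simp: residue_ring_simps)
  have "int (gcd d e) dvd x" "int (gcd d e) dvd y" "int (gcd d e) dvd int n"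
    using xy d by (auto simp: multiples_def intro: dvd_trans[of _ "int d"] dvd_trans[of _ "int e"])
  hence "int (gcd d e) dvd z" using xy(3) by (simp add: dvd_mod_iff)
  moreover have "0 \<le> z" "z < int n" using xy(3) n by auto
  ultimately show "z \<in> multiples n (gcd d e)" by (simp add: multiples_def)
next
  fix z assume "z \<in> multiples n (gcd d e)"
  hence z: "0 \<le> z" "z < int n" "int (gcd d e) dvd z" by (auto simp: multiples_def)
  obtain c where c: "z = int (gcd d e) * c" using z(3) by auto
  obtain a b where ab: "int (gcd d e) = a * int d + b * int e"
    using bezout_int[of "int d" "int e"] by (metis gcd_int_int_eq)
  define x where "x = (c * a * int d) mod int n"
  define y where "y = (c * b * int e) mod int n"
  have "x \<in> multiples n d" "y \<in> multiples n e"
    using d e n unfolding x_def y_def multiples_def by (auto simp: dvd_mod_iff)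
  moreover have "z = (x + y) mod int n"
  proof -
    have "(x + y) mod int n = (c * a * int d + c * b * int e) mod int n"
      unfolding x_def y_def by (simp add: mod_add_eq)
    also have "c * a * int d + c * b * int e = z" using c ab by (simp add: algebra_simps)
    finally show ?thesis using z by simp
  qed
  ultimately show "z \<in> multiples n d <+>\<^bsub>Zn n\<^esub> multiples n e"
    unfolding set_add_def' by (auto simp: residue_ring_simps)
qed

lemma multiples_ideal_prod_eq_zero_iff:
  assumes n: "n > 1" and d: "d dvd n" and e: "e dvd n"
  shows "multiples n d \<cdot>\<^bsub>Zn n\<^esub> multiples n e = {0} \<longleftrightarrow> n dvd d * e"
proof
  assume prod_zero: "multiples n d \<cdot>\<^bsub>Zn n\<^esub> multiples n e = {0}"
  have "(int d mod int n) \<otimes>\<^bsub>Zn n\<^esub> (int e mod int n) \<in> multiples n d \<cdot>\<^bsub>Zn n\<^esub> multiples n e"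
    using mod_in_multiples d e n by (intro ideal_prod.prod) auto
  hence "(int d * int e) mod int n = 0" using prod_zero by (simp add: residue_ring_simps mod_mult_eq)
  hence "int n dvd int (d * e)" by (simp add: dvd_eq_mod_eq_0)
  thus "n dvd d * e" by (simp only: of_nat_dvd_iff)
next
  assume n_dvd: "n dvd d * e"
  have "s = 0" if "s \<in> multiples n d \<cdot>\<^bsub>Zn n\<^esub> multiples n e" for s
    using that
  proof (induct s rule: ideal_prod.induct)
    case (prod i j)
    then obtain a b where "i = int d * a" "j = int e * b" by (auto simp: multiples_def elim!: dvdE)
    hence "i * j = int (d * e) * (a * b)" by (simp add: algebra_simps)
    hence "int n dvd i * j" using n_dvd by (metis dvd_mult2 of_nat_dvd_iff)
    thus ?case by (simp add: residue_ring_simps)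
  next
    case (sum s1 s2) thus ?case by (simp add: residue_ring_simps)
  qed
  moreover have "0 \<in> multiples n d \<cdot>\<^bsub>Zn n\<^esub> multiples n e"
    using ideal_prod.prod[of 0 "multiples n d" 0 "multiples n e" "Zn n"] n
    by (simp add: multiples_def residue_ring_simps)
  ultimately show "multiples n d \<cdot>\<^bsub>Zn n\<^esub> multiples n e = {0}" by auto
qed

lemma essential_multiples_iff_lcm:
  assumes n: "n > 1" and d: "d dvd n"
  shows "essential_ideal (Zn n) (multiples n d) \<longleftrightarrow> (\<forall>e. e dvd n \<and> e \<noteq> n \<longrightarrow> lcm d e \<noteq> n)"
proof -
  have "essential_ideal (Zn n) (multiples n d) \<longleftrightarrow>
        (\<forall>J. ideal J (Zn n) \<and> J \<noteq> {0} \<longrightarrow> multiples n d \<inter> J \<noteq> {0})"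
    using ideal_multiples[OF n d] by (simp add: essential_ideal_def residue_ring_simps)
  also have "\<dots> \<longleftrightarrow> (\<forall>e. e dvd n \<and> multiples n e \<noteq> {0} \<longrightarrow> multiples n (lcm d e) \<noteq> {0})"
    using ideal_Zn_iff[OF n] multiples_Int by metis
  also have "\<dots> \<longleftrightarrow> (\<forall>e. e dvd n \<and> e \<noteq> n \<longrightarrow> lcm d e \<noteq> n)"
    using multiples_eq_zero_iff n d by (metis lcm_least less_trans zero_less_one)
  finally show ?thesis .
qed

section \<open>Divisors and multiplicities\<close>

lemma divisor_eqI_multiplicity:
  fixes n d d' :: nat
  assumes n: "n > 0" and d: "d dvd n" and d': "d' dvd n"
    and eq: "\<And>p. p \<in> prime_factors n \<Longrightarrow> multiplicity p d = multiplicity p d'"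
  shows "d = d'"
proof (rule multiplicity_eq_nat)
  show "d > 0" "d' > 0" using n d d' by (auto intro: Nat.gr0I)
  fix q :: nat assume q: "prime q"
  show "multiplicity q d = multiplicity q d'"
  proof (cases "q dvd n")
    case True thus ?thesis using eq q n by (auto simp: in_prime_factors_iff)
  next
    case False
    hence "\<not> q dvd d" "\<not> q dvd d'" using d d' dvd_trans by blast+
    thus ?thesis by (simp add: not_dvd_imp_multiplicity_0)
  qed
qed

lemma multiplicity_div_prime:
  fixes n p q :: nat
  assumes n: "n > 0" and p: "prime p" "p dvd n" and q: "prime q"
  shows "multiplicity q (n div p) = (if q = p then multiplicity p n - 1 else multiplicity q n)"
proof -
  have np: "n = p * (n div p)" using p(2) by simp
  hence "n div p \<noteq> 0" using n by (metis mult_0_right neq0_conv)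
  hence "multiplicity q n = multiplicity q p + multiplicity q (n div p)"
    using prime_elem_multiplicity_mult_distrib[of q p "n div p"] q p np
    by (metis prime_imp_prime_elem prime_gt_0_nat neq0_conv)
  moreover have "multiplicity q p = (if q = p then 1 else 0)"
    using p q by (auto simp: prime_multiplicity_other)
  ultimately show ?thesis by auto
qed

lemma lcm_eq_iff_multiplicity:
  fixes n d e :: nat
  assumes n: "n > 0" and d: "d dvd n" and e: "e dvd n"
  shows "lcm d e = n \<longleftrightarrow>
         (\<forall>p\<in>prime_factors n. max (multiplicity p d) (multiplicity p e) = multiplicity p n)"
proof -
  have nz: "d \<noteq> 0" "e \<noteq> 0" using n d e by auto
  have "lcm d e = n \<longleftrightarrow> (\<forall>p\<in>prime_factors n. multiplicity p (lcm d e) = multiplicity p n)"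
    using divisor_eqI_multiplicity[OF n _ dvd_refl, of "lcm d e"] d e by auto
  also have "\<dots> \<longleftrightarrow> (\<forall>p\<in>prime_factors n. max (multiplicity p d) (multiplicity p e) = multiplicity p n)"
    by (intro ball_cong) (auto simp: multiplicity_lcm[OF nz] in_prime_factors_iff)
  finally show ?thesis .
qed

lemma lcm_proper_divisors_ne_iff:
  fixes n d :: nat
  assumes n0: "n > 0" and d: "d dvd n"
  shows "(\<forall>e. e dvd n \<and> e \<noteq> n \<longrightarrow> lcm d e \<noteq> n) \<longleftrightarrow>
         (\<forall>p\<in>prime_factors n. multiplicity p d < multiplicity p n)"
proof
  assume lcm_ne: "\<forall>e. e dvd n \<and> e \<noteq> n \<longrightarrow> lcm d e \<noteq> n"
  show "\<forall>p\<in>prime_factors n. multiplicity p d < multiplicity p n"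
  proof (rule ballI, rule ccontr)
    fix p assume p: "p \<in> prime_factors n" and full: "\<not> multiplicity p d < multiplicity p n"
    have pr: "prime p" "p dvd n" using p by auto
    define e where "e = n div p"
    have e: "e dvd n" "e \<noteq> n"
      using pr n0 prime_gt_1_nat[of p] div_less_dividend[of p n] unfolding e_def by auto
    have "max (multiplicity q d) (multiplicity q e) = multiplicity q n" if q: "q \<in> prime_factors n" for q
    proof -
      have "prime q" "multiplicity p n > 0" using p q by (auto simp: prime_factors_multiplicity)
      thus ?thesis using full dvd_imp_multiplicity_le[OF d, of q] multiplicity_div_prime[OF n0 pr, of q] n0
        unfolding e_def by (cases "q = p") (auto simp: max_def)
    qed
    hence "lcm d e = n" using lcm_eq_iff_multiplicity[OF n0 d e(1)] by blast
    with lcm_ne e show False by blast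
  qed
next
  assume less: "\<forall>p\<in>prime_factors n. multiplicity p d < multiplicity p n"
  show "\<forall>e. e dvd n \<and> e \<noteq> n \<longrightarrow> lcm d e \<noteq> n"
  proof (intro allI impI notI)
    fix e assume e: "e dvd n \<and> e \<noteq> n" and lcm: "lcm d e = n"
    have "multiplicity p e = multiplicity p n" if p: "p \<in> prime_factors n" for p
    proof -
      have "max (multiplicity p d) (multiplicity p e) = multiplicity p n"
        using lcm_eq_iff_multiplicity[OF n0 d] e lcm p by blast
      with less p show ?thesis by (auto simp: max_def split: if_splits)
    qed
    hence "e = n" using divisor_eqI_multiplicity[OF n0 _ dvd_refl] e by blast
    with e show False by simp
  qed
qed

lemma essential_multiples_iff:
  assumes "n > 1" "d dvd n"
  shows "essential_ideal (Zn n) (multiples n d) \<longleftrightarrow>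
         (\<forall>p\<in>prime_factors n. multiplicity p d < multiplicity p n)"
  using essential_multiples_iff_lcm[OF assms] lcm_proper_divisors_ne_iff[OF _ assms(2)] assms(1)
  by simp

lemma prod_prime_powers_dvd_multiplicity:
  fixes n :: nat and r :: "nat \<Rightarrow> nat"
  assumes n: "n > 0" and r: "\<And>p. p \<in> prime_factors n \<Longrightarrow> r p \<le> multiplicity p n"
  shows "(\<Prod>p\<in>prime_factors n. p ^ r p) dvd n"
    and "\<And>q. q \<in> prime_factors n \<Longrightarrow> multiplicity q (\<Prod>p\<in>prime_factors n. p ^ r p) = r q"
proof -
  have "(\<Prod>p\<in>prime_factors n. p ^ r p) dvd (\<Prod>p\<in>prime_factors n. p ^ multiplicity p n)"
    by (intro prod_dvd_prod le_imp_power_dvd r)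
  thus "(\<Prod>p\<in>prime_factors n. p ^ r p) dvd n" using prime_factorization_nat[OF n] by simp
  show "multiplicity q (\<Prod>p\<in>prime_factors n. p ^ r p) = r q" if "q \<in> prime_factors n" for q
    using that by (subst multiplicity_prod_prime_powers) auto
qed

lemma bij_betw_divisors_exponents:
  fixes n :: nat and A :: "nat \<Rightarrow> nat set"
  assumes n: "n > 0" and A: "\<And>p. p \<in> prime_factors n \<Longrightarrow> A p \<subseteq> {0..multiplicity p n}"
  shows "bij_betw (\<lambda>d. restrict (\<lambda>p. multiplicity p d) (prime_factors n))
           {d. d dvd n \<and> (\<forall>p\<in>prime_factors n. multiplicity p d \<in> A p)} (PiE (prime_factors n) A)"
    (is "bij_betw ?e ?D _")
  unfolding bij_betw_def
proof
  show "inj_on ?e ?D"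
  proof (rule inj_onI)
    fix d d' assume "d \<in> ?D" "d' \<in> ?D" and eq: "?e d = ?e d'"
    moreover have "multiplicity p d = multiplicity p d'" if "p \<in> prime_factors n" for p
      using eq that by (metis restrict_apply')
    ultimately show "d = d'" using divisor_eqI_multiplicity[OF n] by auto
  qed
  show "?e ` ?D = PiE (prime_factors n) A"
  proof (intro subset_antisym subsetI)
    fix f assume "f \<in> ?e ` ?D" thus "f \<in> PiE (prime_factors n) A" by auto
  next
    fix f assume f: "f \<in> PiE (prime_factors n) A"
    have "f p \<le> multiplicity p n" if "p \<in> prime_factors n" for p
      using A[OF that] PiE_mem[OF f that] by auto
    note prod = prod_prime_powers_dvd_multiplicity[OF n this]
    define d where "d = (\<Prod>p\<in>prime_factors n. p ^ f p)"
    have "?e d = restrict f (prime_factors n)"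
      using prod(2) unfolding d_def by (intro restrict_ext) simp
    hence "f = ?e d" using f by (simp add: PiE_restrict)
    moreover have "d \<in> ?D" using prod PiE_mem[OF f] unfolding d_def by auto
    ultimately show "f \<in> ?e ` ?D" by blast
  qed
qed

lemma card_divisors_exponents:
  fixes n :: nat and A :: "nat \<Rightarrow> nat set"
  assumes "n > 0" "\<And>p. p \<in> prime_factors n \<Longrightarrow> A p \<subseteq> {0..multiplicity p n}"
  shows "card {d. d dvd n \<and> (\<forall>p\<in>prime_factors n. multiplicity p d \<in> A p)} =
         (\<Prod>p\<in>prime_factors n. card (A p))"
  using bij_betw_same_card[OF bij_betw_divisors_exponents[OF assms]] by (simp add: card_PiE)

lemma gen_ideal_inj:
  assumes "n > 1" "d dvd n" "e dvd n" "gen_ideal n d = gen_ideal n e" shows "d = e"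
  using multiples_inj[of n d e] gen_ideal_eq_multiples assms by auto

lemma gen_ideal_eq_zero_iff:
  assumes "n > 1" "d dvd n" shows "gen_ideal n d = {\<zero>\<^bsub>Zn n\<^esub>} \<longleftrightarrow> d = n"
  using gen_ideal_eq_multiples[OF assms] multiples_eq_zero_iff[of n d] assms
  by (simp add: residue_ring_simps)

lemma gen_ideal_prod_eq_zero_iff:
  assumes "n > 1" "d dvd n" "e dvd n"
  shows "gen_ideal n d \<cdot>\<^bsub>Zn n\<^esub> gen_ideal n e = {\<zero>\<^bsub>Zn n\<^esub>} \<longleftrightarrow> n dvd d * e"
  using multiples_ideal_prod_eq_zero_iff[OF assms] gen_ideal_eq_multiples[OF assms(1,2)]
    gen_ideal_eq_multiples[OF assms(1,3)] by (simp add: residue_ring_simps)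

lemma ideal_Zn_iff_gen_ideal:
  "n > 1 \<Longrightarrow> ideal I (Zn n) \<longleftrightarrow> (\<exists>d. d dvd n \<and> I = gen_ideal n d)"
  using ideal_Zn_iff gen_ideal_eq_multiples by metis

lemma nzp_ideal_iff:
  assumes n: "n > 1"
  shows "nzp_ideal (Zn n) I \<longleftrightarrow> (\<exists>d. d dvd n \<and> d \<noteq> 1 \<and> d \<noteq> n \<and> I = gen_ideal n d)"
proof -
  have one: "gen_ideal n 1 = carrier (Zn n)"
    using gen_ideal_eq_multiples[OF n] multiples_one by simp
  have "d \<noteq> 1 \<longleftrightarrow> gen_ideal n d \<noteq> gen_ideal n 1" if "d dvd n" for d
    using gen_ideal_inj[OF n that] by auto
  thus ?thesis
    unfolding nzp_ideal_def ideal_Zn_iff_gen_ideal[OF n] one[symmetric]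
    using gen_ideal_eq_zero_iff[OF n] by auto
qed

lemma ideal_div_gen_ideal:
  assumes "n > 1" "d dvd n" shows "ideal_div n (gen_ideal n d) = d"
  unfolding ideal_div_def by (rule the_equality) (use gen_ideal_inj[OF assms(1)] assms(2) in auto)

lemma Xi_gen_ideal:
  assumes "n > 1" "d dvd n"
  shows "Xi n (gen_ideal n d) = {p \<in> prime_factors n. multiplicity p d = multiplicity p n}"
  unfolding Xi_def ideal_div_gen_ideal[OF assms] ..

lemma essential_gen_ideal_iff:
  assumes "n > 1" "d dvd n"
  shows "essential_ideal (Zn n) (gen_ideal n d) \<longleftrightarrow>
         (\<forall>p\<in>prime_factors n. multiplicity p d < multiplicity p n)"
  using essential_multiples_iff[OF assms] gen_ideal_eq_multiples[OF assms] by simp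

lemma set_add_gen_ideal:
  assumes n: "n > 1" and d: "d dvd n" and e: "e dvd n"
  shows "gen_ideal n d <+>\<^bsub>Zn n\<^esub> gen_ideal n e = gen_ideal n (gcd d e)"
  using multiples_set_add[OF assms] gen_ideal_eq_multiples[OF n] d e
  by (simp add: dvd_trans[OF gcd_dvd1 d])

lemma adj_Egraph_gen_ideal:
  assumes n: "n > 1" and d: "d dvd n" and e: "e dvd n"
  shows "adj (Egraph n) (gen_ideal n d) (gen_ideal n e) \<longleftrightarrow> gen_ideal n d \<noteq> gen_ideal n e \<and>
     (\<forall>p\<in>prime_factors n. multiplicity p d < multiplicity p n \<or> multiplicity p e < multiplicity p n)"
proof -
  have nz: "d \<noteq> 0" "e \<noteq> 0" using n d e by (metis dvd_0_left_iff not_one_less_zero)+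
  have "multiplicity p (gcd d e) < multiplicity p n \<longleftrightarrow>
        multiplicity p d < multiplicity p n \<or> multiplicity p e < multiplicity p n"
    if "p \<in> prime_factors n" for p
    using that by (auto simp: multiplicity_gcd[OF nz] in_prime_factors_iff)
  thus ?thesis
    unfolding Egraph_def adj_def snd_conv set_add_gen_ideal[OF n d e]
      essential_gen_ideal_iff[OF n dvd_trans[OF gcd_dvd1 d]] by auto
qed

lemma full_powers_dvd_multiplicity:
  fixes n :: nat
  assumes n: "n > 0" and S: "S \<subseteq> prime_factors n"
  shows "(\<Prod>p\<in>S. p ^ multiplicity p n) dvd n"
    and "\<And>q. prime q \<Longrightarrow> multiplicity q (\<Prod>p\<in>S. p ^ multiplicity p n) =
                            (if q \<in> S then multiplicity q n else 0)"
proof -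
  have "(\<Prod>p\<in>S. p ^ multiplicity p n) dvd (\<Prod>p\<in>prime_factors n. p ^ multiplicity p n)"
    by (rule prod_dvd_prod_subset[OF _ S]) simp
  thus "(\<Prod>p\<in>S. p ^ multiplicity p n) dvd n" using prime_factorization_nat[OF n] by simp
  show "multiplicity q (\<Prod>p\<in>S. p ^ multiplicity p n) = (if q \<in> S then multiplicity q n else 0)"
    if "prime q" for q
    using that S finite_subset[OF S] by (subst multiplicity_prod_prime_powers) auto
qed

lemma Xi_full_power_ideal:
  assumes n: "n > 1" and S: "S \<subseteq> prime_factors n"
  shows "Xi n (full_power_ideal n S) = S"
proof -
  have n0: "n > 0" using n by simp
  note full = full_powers_dvd_multiplicity[OF n0 S]
  have full_iff: "multiplicity p (\<Prod>p\<in>S. p ^ multiplicity p n) = multiplicity p n \<longleftrightarrow> p \<in> S"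
    if "p \<in> prime_factors n" for p
  proof -
    have "prime p" "multiplicity p n > 0" using that by (auto simp: prime_factors_multiplicity)
    with full(2)[of p] show ?thesis by auto
  qed
  have "Xi n (full_power_ideal n S) =
        {p \<in> prime_factors n. multiplicity p (\<Prod>p\<in>S. p ^ multiplicity p n) = multiplicity p n}"
    unfolding full_power_ideal_def by (rule Xi_gen_ideal[OF n full(1)])
  also have "\<dots> = S" using S full_iff by blast
  finally show ?thesis .
qed

lemma full_power_ideal_inj:
  assumes "n > 1" "S \<subseteq> prime_factors n" "T \<subseteq> prime_factors n"
    and "full_power_ideal n S = full_power_ideal n T"
  shows "S = T"
  using Xi_full_power_ideal[OF assms(1,2)] Xi_full_power_ideal[OF assms(1,3)] assms(4) by metis

lemma verts_Ggraph:
  "verts (Ggraph n) = full_power_ideal n ` {S. S \<subseteq> prime_factors n \<and> S \<noteq> {} \<and> S \<noteq> prime_factors n}"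
  unfolding Ggraph_def verts_def by auto

lemma Ggraph_vertexE:
  assumes "I \<in> verts (Ggraph n)"
  obtains S where "S \<subseteq> prime_factors n" "S \<noteq> {}" "S \<noteq> prime_factors n" "I = full_power_ideal n S"
  using assms unfolding verts_Ggraph by auto

lemma adj_Ggraph:
  assumes n: "n > 1" and S: "S \<subseteq> prime_factors n" "S \<noteq> {}" "S \<noteq> prime_factors n"
    and T: "T \<subseteq> prime_factors n" "T \<noteq> {}" "T \<noteq> prime_factors n"
  shows "adj (Ggraph n) (full_power_ideal n S) (full_power_ideal n T) \<longleftrightarrow> S \<inter> T = {}"
proof
  assume "adj (Ggraph n) (full_power_ideal n S) (full_power_ideal n T)"
  then obtain S' T' where "S' \<subseteq> prime_factors n" "T' \<subseteq> prime_factors n" "S' \<inter> T' = {}"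
    "full_power_ideal n S = full_power_ideal n S'" "full_power_ideal n T = full_power_ideal n T'"
    unfolding Ggraph_def adj_def snd_conv by blast
  thus "S \<inter> T = {}" using full_power_ideal_inj[OF n] S(1) T(1) by metis
next
  assume "S \<inter> T = {}"
  thus "adj (Ggraph n) (full_power_ideal n S) (full_power_ideal n T)"
    unfolding Ggraph_def adj_def snd_conv using S T by blast
qed

section \<open>Isomorphisms of graphs\<close>

lemma graph_simps [simp]:
  "verts (graph_join G H) = verts G <+> verts H"
  "adj (graph_join G H) (Inl a) (Inl b) = adj G a b"
  "adj (graph_join G H) (Inr a') (Inr b') = adj H a' b'"
  "adj (graph_join G H) (Inl a) (Inr b') = True"
  "adj (graph_join G H) (Inr a') (Inl b) = True"
  "verts (gen_join G \<Gamma>) = (SIGMA v:verts G. verts (\<Gamma> v))"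
  "adj (gen_join G \<Gamma>) (u, x) (v, y) = ((u = v \<and> adj (\<Gamma> u) x y) \<or> (u \<noteq> v \<and> adj G u v))"
  "verts (induced_subgraph G S) = S \<inter> verts G"
  "adj (induced_subgraph G S) = adj G"
  "verts (complete_graph k) = {0..<k}"
  "adj (complete_graph k) i j = (i \<noteq> j)"
  "verts (edgeless_graph k) = {0..<k}"
  "adj (edgeless_graph k) i j = False"
  by (simp_all add: graph_join_def gen_join_def induced_subgraph_def complete_graph_def
      edgeless_graph_def verts_def adj_def)

lemma graph_isoI_parametrization:
  assumes g: "bij_betw g X (verts G)" and h: "bij_betw h X (verts H)"
    and adj: "\<And>x y. x \<in> X \<Longrightarrow> y \<in> X \<Longrightarrow> adj G (g x) (g y) \<longleftrightarrow> adj H (h x) (h y)"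
  shows "graph_iso G H"
  unfolding graph_iso_def
proof (intro exI conjI ballI)
  show "bij_betw (h \<circ> inv_into X g) (verts G) (verts H)"
    using bij_betw_trans[OF bij_betw_inv_into[OF g] h] .
  fix u v assume "u \<in> verts G" "v \<in> verts G"
  moreover have "g (inv_into X g w) = w" "inv_into X g w \<in> X" if "w \<in> verts G" for w
    using that g by (auto simp: bij_betw_def f_inv_into_f inv_into_into)
  ultimately show "adj G u v \<longleftrightarrow> adj H ((h \<circ> inv_into X g) u) ((h \<circ> inv_into X g) v)"
    using adj by (metis comp_apply)
qed

lemma graph_iso_edgeless_graph:
  assumes "finite (verts G)" "\<And>u v. u \<in> verts G \<Longrightarrow> v \<in> verts G \<Longrightarrow> \<not> adj G u v"
  shows "graph_iso G (edgeless_graph (card (verts G)))"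
proof -
  obtain f where "bij_betw f (verts G) {0..<card (verts G)}"
    using ex_bij_betw_finite_nat[OF assms(1)] by blast
  thus ?thesis unfolding graph_iso_def using assms(2) by auto
qed

text \<open>The isomorphism numbers the clique \<open>A\<close> and sends every other vertex \<open>u\<close> to \<open>(\<pi> u, u)\<close>.\<close>
lemma graph_iso_join_complete_gen_join:
  assumes A: "A \<subseteq> verts G" "finite A"
    and loopless: "\<And>u. u \<in> verts G \<Longrightarrow> \<not> adj G u u"
    and dominating: "\<And>a u. a \<in> A \<Longrightarrow> u \<in> verts G \<Longrightarrow> a \<noteq> u \<Longrightarrow> adj G a u \<and> adj G u a"
    and class_of: "\<And>u. u \<in> verts G - A \<Longrightarrow> \<pi> u \<in> verts H \<and> u \<in> C (\<pi> u)"
    and classes: "\<And>v u. v \<in> verts H \<Longrightarrow> u \<in> C v \<inter> verts G \<Longrightarrow> u \<notin> A \<and> \<pi> u = v"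
    and quotient: "\<And>u w. u \<in> verts G - A \<Longrightarrow> w \<in> verts G - A \<Longrightarrow> \<pi> u \<noteq> \<pi> w \<Longrightarrow>
                     adj G u w \<longleftrightarrow> adj H (\<pi> u) (\<pi> w)"
  shows "graph_iso G (graph_join (complete_graph (card A)) (gen_join H (\<lambda>v. induced_subgraph G (C v))))"
proof -
  obtain h where h: "bij_betw h A {0..<card A}" using ex_bij_betw_finite_nat[OF A(2)] by blast
  define f where "f u = (if u \<in> A then Inl (h u) else Inr (\<pi> u, u))" for u
  have "inj_on f (verts G)"
    using h by (auto simp: f_def inj_on_def bij_betw_def split: if_splits)
  moreover have "f ` verts G = {0..<card A} <+> (SIGMA v:verts H. C v \<inter> verts G)"
  proof (intro subset_antisym subsetI)
    fix x assume "x \<in> f ` verts G"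
    thus "x \<in> {0..<card A} <+> (SIGMA v:verts H. C v \<inter> verts G)"
      using h class_of by (auto simp: f_def bij_betw_def)
  next
    fix x assume x: "x \<in> {0..<card A} <+> (SIGMA v:verts H. C v \<inter> verts G)"
    show "x \<in> f ` verts G"
    proof (cases x)
      case (Inl k)
      then obtain a where "a \<in> A" "x = f a" using x h unfolding f_def bij_betw_def by auto
      thus ?thesis using A(1) by blast
    next
      case (Inr y)
      then obtain v u where "x = Inr (v, u)" "v \<in> verts H" "u \<in> C v \<inter> verts G"
        using x by (cases y) auto
      hence "x = f u" "u \<in> verts G" using classes unfolding f_def by auto
      thus ?thesis by blast
    qed
  qed
  moreover have "adj G u w \<longleftrightarrow>
      adj (graph_join (complete_graph (card A)) (gen_join H (\<lambda>v. induced_subgraph G (C v)))) (f u) (f w)"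
    if "u \<in> verts G" "w \<in> verts G" for u w
  proof (cases "u \<in> A"; cases "w \<in> A")
    assume "u \<in> A" "w \<in> A"
    moreover have "h u = h w \<longleftrightarrow> u = w" using h \<open>u \<in> A\<close> \<open>w \<in> A\<close> by (auto simp: bij_betw_def inj_on_def)
    ultimately show ?thesis using that loopless dominating by (auto simp: f_def)
  next
    assume "u \<notin> A" "w \<notin> A"
    thus ?thesis using that quotient by (auto simp: f_def)
  qed (use that dominating in \<open>auto simp: f_def\<close>)
  ultimately show ?thesis unfolding graph_iso_def by (auto simp: bij_betw_def)
qed

section \<open>Structure of the essential ideal graph\<close>

lemma verts_Egraph: "verts (Egraph n) = {I. nzp_ideal (Zn n) I}"
  by (simp add: Egraph_def verts_def)

lemma Xi_subset: "Xi n I \<subseteq> prime_factors n"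
  by (auto simp: Xi_def)

context
  fixes n :: nat
  assumes n: "n > 1"
begin

lemma prime_factors_nonempty: "prime_factors n \<noteq> {}"
proof -
  obtain p where "prime p" "p dvd n" using prime_factor_nat[of n] n by auto
  hence "p \<in> prime_factors n" using n by (auto intro: prime_factorsI)
  thus ?thesis by blast
qed

lemma multiplicity_divisor_le: "d dvd n \<Longrightarrow> multiplicity p d \<le> multiplicity p n"
  using dvd_imp_multiplicity_le[of d n p] n by simp

lemma Egraph_vertexE:
  assumes "I \<in> verts (Egraph n)"
  obtains d where "d dvd n" "d \<noteq> 1" "d \<noteq> n" "I = gen_ideal n d"
  using assms nzp_ideal_iff[OF n] by (auto simp: verts_Egraph)

lemma Xi_nonessential:
  assumes I: "I \<in> verts (Egraph n)" and nonessential: "\<not> essential_ideal (Zn n) I"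
  shows "Xi n I \<noteq> {}" "Xi n I \<noteq> prime_factors n"
proof -
  obtain d where d: "d dvd n" "d \<noteq> n" "I = gen_ideal n d" using I by (rule Egraph_vertexE)
  note Xi = Xi_gen_ideal[OF n d(1)]
  obtain p where "p \<in> prime_factors n" "\<not> multiplicity p d < multiplicity p n"
    using nonessential essential_gen_ideal_iff[OF n d(1)] d(3) by auto
  hence "p \<in> Xi n I" using multiplicity_divisor_le[OF d(1), of p] unfolding d(3) Xi by auto
  thus "Xi n I \<noteq> {}" by auto
  show "Xi n I \<noteq> prime_factors n"
  proof
    assume "Xi n I = prime_factors n"
    hence "d = n" using divisor_eqI_multiplicity[OF _ d(1) dvd_refl] n unfolding d(3) Xi by auto
    with d(2) show False ..
  qed
qed

lemma adj_Egraph_essential: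
  assumes I: "I \<in> verts (Egraph n)" and J: "J \<in> verts (Egraph n)"
    and essential: "essential_ideal (Zn n) I" and "I \<noteq> J"
  shows "adj (Egraph n) I J \<and> adj (Egraph n) J I"
proof -
  obtain d where d: "d dvd n" "I = gen_ideal n d" using I by (rule Egraph_vertexE)
  obtain e where e: "e dvd n" "J = gen_ideal n e" using J by (rule Egraph_vertexE)
  have "\<forall>p\<in>prime_factors n. multiplicity p d < multiplicity p n"
    using essential essential_gen_ideal_iff[OF n d(1)] d(2) by simp
  thus ?thesis
    using adj_Egraph_gen_ideal[OF n d(1) e(1)] adj_Egraph_gen_ideal[OF n e(1) d(1)] \<open>I \<noteq> J\<close> d e
    by auto
qed

lemma adj_Egraph_nonessential:
  assumes I: "I \<in> verts (Egraph n)" "\<not> essential_ideal (Zn n) I"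
    and J: "J \<in> verts (Egraph n)" "\<not> essential_ideal (Zn n) J"
  shows "adj (Egraph n) I J \<longleftrightarrow> Xi n I \<inter> Xi n J = {}"
proof -
  obtain d where d: "d dvd n" "I = gen_ideal n d" using I(1) by (rule Egraph_vertexE)
  obtain e where e: "e dvd n" "J = gen_ideal n e" using J(1) by (rule Egraph_vertexE)
  have "(\<forall>p\<in>prime_factors n. multiplicity p d < multiplicity p n \<or> multiplicity p e < multiplicity p n)
        \<longleftrightarrow> Xi n I \<inter> Xi n J = {}"
    unfolding d(2) e(2) Xi_gen_ideal[OF n d(1)] Xi_gen_ideal[OF n e(1)]
    using multiplicity_divisor_le[OF d(1)] multiplicity_divisor_le[OF e(1)] by (auto simp: order_le_less)
  moreover have "I \<noteq> J" if "Xi n I \<inter> Xi n J = {}" using that Xi_nonessential(1)[OF I] by auto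
  ultimately show ?thesis using adj_Egraph_gen_ideal[OF n d(1) e(1)] d e by auto
qed

lemma finite_card_gen_ideals_exponents:
  assumes A: "\<And>p. p \<in> prime_factors n \<Longrightarrow> A p \<subseteq> {0..multiplicity p n}"
  defines "\<I> \<equiv> gen_ideal n ` {d. d dvd n \<and> (\<forall>p\<in>prime_factors n. multiplicity p d \<in> A p)}"
  shows "finite \<I>" "card \<I> = (\<Prod>p\<in>prime_factors n. card (A p))"
proof -
  let ?D = "{d. d dvd n \<and> (\<forall>p\<in>prime_factors n. multiplicity p d \<in> A p)}"
  have "finite ?D" using n by (auto intro: finite_subset[OF _ finite_divisors_nat])
  thus "finite \<I>" unfolding \<I>_def by simp
  have "inj_on (gen_ideal n) ?D" using gen_ideal_inj[OF n] by (auto intro: inj_onI)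
  thus "card \<I> = (\<Prod>p\<in>prime_factors n. card (A p))"
    unfolding \<I>_def using card_divisors_exponents[OF _ A] n by (simp add: card_image)
qed

lemma essential_vertices_eq:
  "{I \<in> verts (Egraph n). essential_ideal (Zn n) I} =
   gen_ideal n ` {d. d dvd n \<and> (\<forall>p\<in>prime_factors n. multiplicity p d \<in> {0..<multiplicity p n})}
     - {gen_ideal n 1}" (is "?L = ?R")
proof (intro subset_antisym subsetI)
  fix I assume "I \<in> ?L"
  then obtain d where d: "d dvd n" "d \<noteq> 1" "I = gen_ideal n d" and "essential_ideal (Zn n) I"
    by (auto elim: Egraph_vertexE)
  hence "\<forall>p\<in>prime_factors n. multiplicity p d < multiplicity p n"
    using essential_gen_ideal_iff[OF n d(1)] by simp
  moreover have "gen_ideal n d \<noteq> gen_ideal n 1" using gen_ideal_inj[OF n d(1)] d(2) by auto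
  ultimately show "I \<in> ?R" using d by auto
next
  fix I assume "I \<in> ?R"
  then obtain d where d: "d dvd n" "I = gen_ideal n d" "I \<noteq> gen_ideal n 1"
    and less: "\<forall>p\<in>prime_factors n. multiplicity p d < multiplicity p n" by auto
  obtain p where "p \<in> prime_factors n" using prime_factors_nonempty by blast
  hence "d \<noteq> n" using less by auto
  moreover have "d \<noteq> 1" using d by auto
  ultimately show "I \<in> ?L"
    using d less nzp_ideal_iff[OF n] essential_gen_ideal_iff[OF n d(1)] by (auto simp: verts_Egraph)
qed

lemma finite_card_essential_vertices:
  "finite {I \<in> verts (Egraph n). essential_ideal (Zn n) I}"
  "card {I \<in> verts (Egraph n). essential_ideal (Zn n) I} = (\<Prod>p\<in>prime_factors n. multiplicity p n) - 1"
proof -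
  let ?X = "gen_ideal n ` {d. d dvd n \<and> (\<forall>p\<in>prime_factors n. multiplicity p d \<in> {0..<multiplicity p n})}"
  have "{0..<multiplicity p n} \<subseteq> {0..multiplicity p n}" for p by auto
  note X = finite_card_gen_ideals_exponents[of "\<lambda>p. {0..<multiplicity p n}", OF this]
  have "gen_ideal n 1 \<in> ?X" by (auto simp: prime_factors_multiplicity)
  thus "finite {I \<in> verts (Egraph n). essential_ideal (Zn n) I}"
    "card {I \<in> verts (Egraph n). essential_ideal (Zn n) I} = (\<Prod>p\<in>prime_factors n. multiplicity p n) - 1"
    unfolding essential_vertices_eq using X by (simp_all add: card_Diff_singleton)
qed

lemma Xi_gen_ideal_eq_iff:
  assumes d: "d dvd n" and S: "S \<subseteq> prime_factors n"
  shows "Xi n (gen_ideal n d) = S \<longleftrightarrow> (\<forall>p\<in>prime_factors n. multiplicity p d \<in>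
           (if p \<in> S then {multiplicity p n} else {0..<multiplicity p n}))"
  unfolding Xi_gen_ideal[OF n d] using multiplicity_divisor_le[OF d] S by (auto simp: order_le_less)

lemma ideal_class_full_power_ideal:
  assumes S: "S \<subseteq> prime_factors n" "S \<noteq> {}" "S \<noteq> prime_factors n"
  shows "ideal_class n (full_power_ideal n S) = gen_ideal n ` {d. d dvd n \<and>
    (\<forall>p\<in>prime_factors n. multiplicity p d \<in> (if p \<in> S then {multiplicity p n} else {0..<multiplicity p n}))}"
  (is "_ = ?R")
proof (intro subset_antisym subsetI)
  fix J assume "J \<in> ideal_class n (full_power_ideal n S)"
  hence J: "J \<in> verts (Egraph n)" "Xi n J = S"
    unfolding ideal_class_def Xi_full_power_ideal[OF n S(1)] verts_Egraph by auto
  obtain d where d: "d dvd n" "J = gen_ideal n d" using J(1) by (rule Egraph_vertexE)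
  show "J \<in> ?R" using J(2) Xi_gen_ideal_eq_iff[OF d(1) S(1)] d by auto
next
  fix J assume "J \<in> ?R"
  then obtain d where d: "d dvd n" "J = gen_ideal n d" and Xi: "Xi n J = S"
    using Xi_gen_ideal_eq_iff[OF _ S(1)] by auto
  obtain p where p: "p \<in> S" using S(2) by blast
  obtain q where q: "q \<in> prime_factors n" "q \<notin> S" using S(1,3) by blast
  have "p \<in> prime_factors n" "multiplicity p d = multiplicity p n" using p S(1) Xi
    unfolding d(2) Xi_gen_ideal[OF n d(1)] by auto
  hence "d \<noteq> 1" "\<not> essential_ideal (Zn n) J"
    using essential_gen_ideal_iff[OF n d(1)] d(2) by (auto simp: prime_factors_multiplicity)
  moreover have "d \<noteq> n" using q Xi unfolding d(2) Xi_gen_ideal[OF n d(1)] by auto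
  ultimately show "J \<in> ideal_class n (full_power_ideal n S)"
    unfolding ideal_class_def Xi_full_power_ideal[OF n S(1)] using Xi d nzp_ideal_iff[OF n] by auto
qed

lemma nonessential_in_ideal_class:
  assumes "I \<in> verts (Egraph n)" "\<not> essential_ideal (Zn n) I"
  shows "full_power_ideal n (Xi n I) \<in> verts (Ggraph n)"
    and "I \<in> ideal_class n (full_power_ideal n (Xi n I))"
proof -
  show "full_power_ideal n (Xi n I) \<in> verts (Ggraph n)"
    unfolding verts_Ggraph using Xi_subset Xi_nonessential[OF assms] by blast
  show "I \<in> ideal_class n (full_power_ideal n (Xi n I))"
    using assms Xi_full_power_ideal[OF n Xi_subset] unfolding ideal_class_def verts_Egraph by simp
qed

lemma ideal_classD:
  assumes v: "v \<in> verts (Ggraph n)" and I: "I \<in> ideal_class n v"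
  shows "\<not> essential_ideal (Zn n) I" "full_power_ideal n (Xi n I) = v"
proof -
  obtain S where S: "S \<subseteq> prime_factors n" "S \<noteq> {}" "S \<noteq> prime_factors n"
    "v = full_power_ideal n S" using v by (rule Ggraph_vertexE)
  show "\<not> essential_ideal (Zn n) I" using I unfolding ideal_class_def by auto
  have "Xi n I = Xi n v" using I unfolding ideal_class_def by auto
  also have "Xi n v = S" using Xi_full_power_ideal[OF n S(1)] S(4) by simp
  finally show "full_power_ideal n (Xi n I) = v" using S(4) by simp
qed

lemma Egraph_iso_join:
  "graph_iso (Egraph n)
     (graph_join (complete_graph ((\<Prod>p\<in>prime_factors n. multiplicity p n) - 1))
        (gen_join (Ggraph n) (\<lambda>I. induced_subgraph (Egraph n) (ideal_class n I))))"
proof -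
  let ?A = "{I \<in> verts (Egraph n). essential_ideal (Zn n) I}"
  let ?\<pi> = "\<lambda>I. full_power_ideal n (Xi n I)"
  have "graph_iso (Egraph n) (graph_join (complete_graph (card ?A))
          (gen_join (Ggraph n) (\<lambda>I. induced_subgraph (Egraph n) (ideal_class n I))))"
  proof (rule graph_iso_join_complete_gen_join[where \<pi> = ?\<pi>])
    show "?A \<subseteq> verts (Egraph n)" "finite ?A" using finite_card_essential_vertices by auto
    show "\<not> adj (Egraph n) I I" for I by (simp add: Egraph_def adj_def)
    show "adj (Egraph n) I J \<and> adj (Egraph n) J I" if "I \<in> ?A" "J \<in> verts (Egraph n)" "I \<noteq> J" for I J
      using adj_Egraph_essential that by auto
    show "?\<pi> I \<in> verts (Ggraph n) \<and> I \<in> ideal_class n (?\<pi> I)" if "I \<in> verts (Egraph n) - ?A" for I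
      using nonessential_in_ideal_class that by auto
    show "I \<notin> ?A \<and> ?\<pi> I = v" if "v \<in> verts (Ggraph n)" "I \<in> ideal_class n v \<inter> verts (Egraph n)" for v I
      using ideal_classD that by auto
    show "adj (Egraph n) I J \<longleftrightarrow> adj (Ggraph n) (?\<pi> I) (?\<pi> J)"
      if "I \<in> verts (Egraph n) - ?A" "J \<in> verts (Egraph n) - ?A" for I J
    proof -
      have I: "I \<in> verts (Egraph n)" "\<not> essential_ideal (Zn n) I"
        and J: "J \<in> verts (Egraph n)" "\<not> essential_ideal (Zn n) J" using that by auto
      have "adj (Ggraph n) (?\<pi> I) (?\<pi> J) \<longleftrightarrow> Xi n I \<inter> Xi n J = {}"
        by (rule adj_Ggraph[OF n Xi_subset Xi_nonessential[OF I] Xi_subset Xi_nonessential[OF J]])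
      thus ?thesis using adj_Egraph_nonessential[OF I J] by simp
    qed
  qed
  thus ?thesis using finite_card_essential_vertices(2) by simp
qed

lemma ideal_class_iso_edgeless:
  assumes "I \<in> verts (Ggraph n)"
  shows "graph_iso (induced_subgraph (Egraph n) (ideal_class n I))
           (edgeless_graph (\<Prod>p\<in>prime_factors n - Xi n I. multiplicity p n))"
proof -
  obtain S where S: "S \<subseteq> prime_factors n" "S \<noteq> {}" "S \<noteq> prime_factors n"
    and I: "I = full_power_ideal n S" using assms by (rule Ggraph_vertexE)
  have Xi: "Xi n I = S" using Xi_full_power_ideal[OF n S(1)] I by simp
  have verts: "verts (induced_subgraph (Egraph n) (ideal_class n I)) = ideal_class n I"
    by (auto simp: ideal_class_def verts_Egraph)
  have "(if p \<in> S then {multiplicity p n} else {0..<multiplicity p n}) \<subseteq> {0..multiplicity p n}" for p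
    by auto
  note class_card = finite_card_gen_ideals_exponents[OF this, folded ideal_class_full_power_ideal[OF S]]
  have "card (ideal_class n I) =
        (\<Prod>p\<in>prime_factors n. card (if p \<in> S then {multiplicity p n} else {0..<multiplicity p n}))"
    using class_card(2) I by simp
  also have "\<dots> = (\<Prod>p\<in>prime_factors n. if p \<in> S then 1 else multiplicity p n)"
    by (intro prod.cong) auto
  also have "\<dots> = (\<Prod>p\<in>prime_factors n - S. multiplicity p n)"
    by (subst prod.If_cases) (auto simp: Diff_eq)
  finally have card: "card (ideal_class n I) = (\<Prod>p\<in>prime_factors n - Xi n I. multiplicity p n)"
    unfolding Xi .
  have "\<not> adj (Egraph n) J K" if "J \<in> ideal_class n I" "K \<in> ideal_class n I" for J K
    using that adj_Egraph_nonessential S(2) Xi unfolding ideal_class_def verts_Egraph by auto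
  thus ?thesis
    using graph_iso_edgeless_graph[of "induced_subgraph (Egraph n) (ideal_class n I)"] class_card(1) I
    unfolding verts card by simp
qed

end

section \<open>The annihilating-ideal graph of a squarefree modulus\<close>

context
  fixes P :: "nat set"
  assumes P_finite: "finite P" and P_prime: "\<And>p. p \<in> P \<Longrightarrow> prime p"
begin

lemma multiplicity_prod_primes:
  assumes "T \<subseteq> P" "prime r"
  shows "multiplicity r (\<Prod>T) = (if r \<in> T then 1 else 0)"
proof -
  have "finite T" "\<And>p. p \<in> T \<Longrightarrow> prime p" using assms(1) P_prime finite_subset[OF _ P_finite] by auto
  from multiplicity_prod_prime_powers[where f = "\<lambda>_. 1", OF this assms(2)] show ?thesis by simp
qed

lemma prime_factors_prod_primes:
  assumes "T \<subseteq> P" shows "prime_factors (\<Prod>T) = T"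
proof -
  have T: "finite T" "\<And>p. p \<in> T \<Longrightarrow> prime p" using assms P_prime finite_subset[OF _ P_finite] by auto
  hence "0 \<notin> T" by force
  hence "prime_factors (\<Prod>T) = (\<Union>p\<in>T. prime_factors p)" using prime_factors_prod[OF T(1), of "\<lambda>x. x"] by simp
  also have "\<dots> = (\<Union>p\<in>T. {p})" using T(2) by (intro SUP_cong) (auto simp: prime_prime_factors)
  finally show ?thesis by simp
qed

lemma prod_primes_inj: "A \<subseteq> P \<Longrightarrow> B \<subseteq> P \<Longrightarrow> \<Prod>A = \<Prod>B \<Longrightarrow> A = B"
  using prime_factors_prod_primes by metis

lemma prod_primes_pos: "T \<subseteq> P \<Longrightarrow> \<Prod>T > 0"
  using P_prime prime_gt_0_nat by (auto intro: prod_pos)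

lemma dvd_prod_primes_iff: "e dvd \<Prod>P \<longleftrightarrow> (\<exists>T\<subseteq>P. e = \<Prod>T)"
proof
  assume e: "e dvd \<Prod>P"
  have e0: "e > 0" using e prod_primes_pos[of P] by (auto intro: Nat.gr0I)
  have T: "prime_factors e \<subseteq> P"
    using dvd_prime_factors[OF _ e] prod_primes_pos[of P] prime_factors_prod_primes[of P] by auto
  have "e = \<Prod>(prime_factors e)"
  proof (rule multiplicity_eq_nat[OF e0 prod_primes_pos[OF T]])
    fix r :: nat assume r: "prime r"
    have "multiplicity r e \<le> multiplicity r (\<Prod>P)"
      using e prod_primes_pos[of P] by (intro dvd_imp_multiplicity_le) auto
    hence "multiplicity r e \<le> 1" using multiplicity_prod_primes[of P r] r by (auto split: if_splits)
    moreover have "r \<in> prime_factors e \<longleftrightarrow> multiplicity r e > 0" using r by (simp add: prime_factors_multiplicity)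
    ultimately show "multiplicity r e = multiplicity r (\<Prod>(prime_factors e))"
      using multiplicity_prod_primes[OF T r] by auto
  qed
  thus "\<exists>T\<subseteq>P. e = \<Prod>T" using T by blast
qed (auto intro: prod_dvd_prod_subset[OF P_finite])

lemma prod_primes_dvd_mult_iff:
  assumes A: "A \<subseteq> P" and B: "B \<subseteq> P"
  shows "\<Prod>P dvd \<Prod>A * \<Prod>B \<longleftrightarrow> P \<subseteq> A \<union> B"
proof
  assume dvd: "\<Prod>P dvd \<Prod>A * \<Prod>B"
  show "P \<subseteq> A \<union> B"
  proof
    fix p assume p: "p \<in> P"
    have "p dvd \<Prod>A * \<Prod>B" using dvd_prodI[OF P_finite p, of "\<lambda>x. x"] dvd by (rule dvd_trans)
    hence "p dvd \<Prod>A \<or> p dvd \<Prod>B" using P_prime[OF p] prime_dvd_mult_iff by blast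
    thus "p \<in> A \<union> B"
      using prime_factorsI[of _ p] P_prime[OF p] prod_primes_pos A B prime_factors_prod_primes
      by (metis UnI1 UnI2 less_numeral_extra(3))
  qed
next
  assume "P \<subseteq> A \<union> B"
  hence "A \<union> B = P" using A B by blast
  hence "\<Prod>A * \<Prod>B = \<Prod>P * \<Prod>(A \<inter> B)"
    using prod.union_inter[of A B "\<lambda>x. x"] finite_subset[OF A P_finite] finite_subset[OF B P_finite]
    by simp
  thus "\<Prod>P dvd \<Prod>A * \<Prod>B" by simp
qed

context
  assumes P_nonempty: "P \<noteq> {}"
begin

lemma prod_primes_gt_one: "\<Prod>P > 1"
proof -
  obtain p where p: "p \<in> P" using P_nonempty by blast
  have "p dvd \<Prod>P" by (rule dvd_prodI[OF P_finite p])
  hence "p \<le> \<Prod>P" using prod_primes_pos[of P] by (simp add: dvd_imp_le)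
  thus ?thesis using prime_gt_1_nat[OF P_prime[OF p]] by linarith
qed

lemma gen_ideal_prod_primes_eq_zero_iff:
  "T \<subseteq> P \<Longrightarrow> gen_ideal (\<Prod>P) (\<Prod>T) = {\<zero>\<^bsub>Zn (\<Prod>P)\<^esub>} \<longleftrightarrow> T = P"
  using gen_ideal_eq_zero_iff[OF prod_primes_gt_one prod_dvd_prod_subset[OF P_finite]] prod_primes_inj
  by blast

lemma ideal_prod_gen_ideal_prod_primes_eq_zero_iff:
  assumes "A \<subseteq> P" "B \<subseteq> P"
  shows "gen_ideal (\<Prod>P) (\<Prod>A) \<cdot>\<^bsub>Zn (\<Prod>P)\<^esub> gen_ideal (\<Prod>P) (\<Prod>B) = {\<zero>\<^bsub>Zn (\<Prod>P)\<^esub>} \<longleftrightarrow>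
         P \<subseteq> A \<union> B"
  using gen_ideal_prod_eq_zero_iff[OF prod_primes_gt_one prod_dvd_prod_subset[OF P_finite assms(1)]
      prod_dvd_prod_subset[OF P_finite assms(2)]] prod_primes_dvd_mult_iff[OF assms] by simp

lemma gen_ideal_prod_primes_inj:
  "A \<subseteq> P \<Longrightarrow> B \<subseteq> P \<Longrightarrow> gen_ideal (\<Prod>P) (\<Prod>A) = gen_ideal (\<Prod>P) (\<Prod>B) \<Longrightarrow> A = B"
  using gen_ideal_inj[OF prod_primes_gt_one] prod_dvd_prod_subset[OF P_finite] prod_primes_inj by metis

lemma verts_AIG_prod_primes:
  "verts (AIG (Zn (\<Prod>P))) = (\<lambda>T. gen_ideal (\<Prod>P) (\<Prod>T)) ` {T. T \<subseteq> P \<and> T \<noteq> {} \<and> T \<noteq> P}"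
  (is "?L = ?R")
proof (intro subset_antisym subsetI)
  have ideal_iff: "ideal I (Zn (\<Prod>P)) \<longleftrightarrow> (\<exists>T\<subseteq>P. I = gen_ideal (\<Prod>P) (\<Prod>T))" for I
    unfolding ideal_Zn_iff_gen_ideal[OF prod_primes_gt_one] dvd_prod_primes_iff by blast
  fix I assume "I \<in> ?L"
  then obtain K where I: "ideal I (Zn (\<Prod>P))" "I \<noteq> {\<zero>\<^bsub>Zn (\<Prod>P)\<^esub>}"
    and K: "ideal K (Zn (\<Prod>P))" "K \<noteq> {\<zero>\<^bsub>Zn (\<Prod>P)\<^esub>}" and IK: "I \<cdot>\<^bsub>Zn (\<Prod>P)\<^esub> K = {\<zero>\<^bsub>Zn (\<Prod>P)\<^esub>}"
    unfolding AIG_def verts_def by auto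
  obtain T where T: "T \<subseteq> P" "I = gen_ideal (\<Prod>P) (\<Prod>T)" using I(1) ideal_iff by blast
  obtain B where B: "B \<subseteq> P" "K = gen_ideal (\<Prod>P) (\<Prod>B)" using K(1) ideal_iff by blast
  have "T \<noteq> P" "B \<noteq> P" using I(2) K(2) T B gen_ideal_prod_primes_eq_zero_iff by auto
  moreover have "P \<subseteq> T \<union> B" using IK T B ideal_prod_gen_ideal_prod_primes_eq_zero_iff by simp
  ultimately show "I \<in> ?R" using T B by blast
next
  fix I assume "I \<in> ?R"
  then obtain T where T: "T \<subseteq> P" "T \<noteq> {}" "T \<noteq> P" "I = gen_ideal (\<Prod>P) (\<Prod>T)" by blast
  let ?K = "gen_ideal (\<Prod>P) (\<Prod>(P - T))"
  have "ideal I (Zn (\<Prod>P))" "ideal ?K (Zn (\<Prod>P))" using ideal_gen_ideal[OF prod_primes_gt_one] T(4) by auto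
  moreover have "I \<noteq> {\<zero>\<^bsub>Zn (\<Prod>P)\<^esub>}" "?K \<noteq> {\<zero>\<^bsub>Zn (\<Prod>P)\<^esub>}"
    using T gen_ideal_prod_primes_eq_zero_iff[of T] gen_ideal_prod_primes_eq_zero_iff[of "P - T"] by auto
  moreover have "I \<cdot>\<^bsub>Zn (\<Prod>P)\<^esub> ?K = {\<zero>\<^bsub>Zn (\<Prod>P)\<^esub>}"
    using ideal_prod_gen_ideal_prod_primes_eq_zero_iff[of T "P - T"] T by auto
  ultimately show "I \<in> ?L" unfolding AIG_def verts_def by auto
qed

lemma adj_AIG_prod_primes:
  assumes "A \<subseteq> P" "B \<subseteq> P"
  shows "adj (AIG (Zn (\<Prod>P))) (gen_ideal (\<Prod>P) (\<Prod>A)) (gen_ideal (\<Prod>P) (\<Prod>B)) \<longleftrightarrow>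
         A \<noteq> B \<and> P \<subseteq> A \<union> B"
  using ideal_prod_gen_ideal_prod_primes_eq_zero_iff[OF assms] gen_ideal_prod_primes_inj[OF assms]
  by (auto simp: AIG_def adj_def)

end

end

lemma Ggraph_iso_AIG:
  assumes n: "n > 1"
  shows "graph_iso (Ggraph n) (AIG (Zn (\<Prod>(prime_factors n))))"
proof -
  let ?P = "prime_factors n"
  let ?X = "{S. S \<subseteq> ?P \<and> S \<noteq> {} \<and> S \<noteq> ?P}"
  have P: "finite ?P" "\<And>p. p \<in> ?P \<Longrightarrow> prime p" "?P \<noteq> {}"
    using prime_factors_nonempty[OF n] by auto
  have "inj_on (full_power_ideal n) ?X" using full_power_ideal_inj[OF n] by (intro inj_onI) auto
  hence "bij_betw (full_power_ideal n) ?X (verts (Ggraph n))"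
    unfolding bij_betw_def verts_Ggraph by simp
  moreover have "bij_betw (\<lambda>S. gen_ideal (\<Prod>?P) (\<Prod>(?P - S))) ?X (verts (AIG (Zn (\<Prod>?P))))"
  proof -
    have "bij_betw (\<lambda>S. ?P - S) ?X ?X"
      by (rule bij_betwI[where g = "\<lambda>S. ?P - S"]) auto
    moreover have "inj_on (\<lambda>T. gen_ideal (\<Prod>?P) (\<Prod>T)) ?X"
      using gen_ideal_prod_primes_inj[OF P] by (intro inj_onI) auto
    hence "bij_betw (\<lambda>T. gen_ideal (\<Prod>?P) (\<Prod>T)) ?X (verts (AIG (Zn (\<Prod>?P))))"
      using verts_AIG_prod_primes[OF P] by (simp add: bij_betw_def)
    ultimately show ?thesis using bij_betw_trans by (fastforce simp: comp_def)
  qed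
  moreover have "adj (Ggraph n) (full_power_ideal n S) (full_power_ideal n T) \<longleftrightarrow>
      adj (AIG (Zn (\<Prod>?P))) (gen_ideal (\<Prod>?P) (\<Prod>(?P - S))) (gen_ideal (\<Prod>?P) (\<Prod>(?P - T)))"
    if "S \<in> ?X" "T \<in> ?X" for S T
    using that adj_Ggraph[OF n] adj_AIG_prod_primes[OF P, of "?P - S" "?P - T"] by auto
  ultimately show ?thesis by (rule graph_isoI_parametrization)
qed

text \<open>The hypothesis that some \<open>m\<^sub>i > 1\<close> only serves to exclude \<open>n = 1\<close>: for squarefree \<open>n\<close>
  the decomposition holds as well, with \<open>m = 0\<close>.\<close>
theorem mainTheorem7:
  fixes n :: nat
  assumes "n > 0"
    and "\<exists>p\<in>prime_factors n. multiplicity p n > 1"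
  shows "graph_iso (Egraph n)
           (graph_join (complete_graph ((\<Prod>p\<in>prime_factors n. multiplicity p n) - 1))
              (gen_join (Ggraph n) (\<lambda>I. induced_subgraph (Egraph n) (ideal_class n I))))
       \<and> (\<forall>I\<in>verts (Ggraph n).
            graph_iso (induced_subgraph (Egraph n) (ideal_class n I))
              (edgeless_graph (\<Prod>p\<in>prime_factors n - Xi n I. multiplicity p n)))
       \<and> graph_iso (Ggraph n) (AIG (residue_ring (int (\<Prod>(prime_factors n)))))"
proof -
  obtain p where "p \<in> prime_factors n" using assms(2) by blast
  hence "prime p" "p \<le> n" using assms(1) by (auto intro: dvd_imp_le)
  hence n: "n > 1" using prime_gt_1_nat[of p] by linarith
  show ?thesis using Egraph_iso_join[OF n] ideal_class_iso_edgeless[OF n] Ggraph_iso_AIG[OF n] by blast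
qed
end
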